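(* Consider the uniform case $\pi^\ell=\mathbf 1/K$. Let $t\in[0,1]$ with $\alpha_t<1$, let $\mathbf x_t\in\mathsf X$, $\ell\in\{1,\dots,L\}$, and write $\mathbf x_t^\ell=e_k$. Set $\nu:=\hat{\mathbf x}^{\mathrm{loo}}_0(\mathbf x_t,t)^\ell$ and $\mu:=\sum_x p^\ell_{0|t}(x\mid\mathbf x_t)\,x$ (the denoiser vector). Then: (i) $$\mu=\frac{(1-\alpha_t)\nu+K\alpha_t\,\nu_k\, e_k}{1-\alpha_t+K\alpha_t\nu_k},$$ and $$\nu=\frac{(1+(K-1)\alpha_t)\mu-K\alpha_t\,\mu_k\,e_k}{1+(K-1)\alpha_t-K\alpha_t\mu_k},$$ where $\nu_k=\langle e_k,\nu\rangle$ and $\mu_k=\langle e_k,\mu\rangle$. (ii) In particular, if $\nu=\mathrm{softmax}(f)$ for some $f\in\mathbb R^K$, then $$\mu=\mathrm{softmax}\Big(f+\log\big(1+\tfrac{K\alpha_t}{1-\alpha_t}\big)\,e_k\Big).$$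
   Context: **Setup.** - Let $K\ge2$, $L\ge1$ and $\mathsf V=\{1,\dots,K\}$. Tokens are identified with the standard basis vectors $e_1,\dots,e_K$ of $\mathbb R^K$. - $\mathsf X=\mathsf V^L$. For $\mathbf x\in\mathsf X$, $\mathbf x^\ell$ is its $\ell$-th token and $\mathbf x^{-\ell}$ denotes the other tokens. - $p_0$ is a distribution on $\mathsf X$. - $\alpha:[0,1]\to[0,1]$ is nonincreasing with $\alpha_0=1$. - Uniform forward kernel: $q^\ell_{t|0}(x_t\mid x_0)=\langle x_t,\alpha_t x_0+(1-\alpha_t)\mathbf 1/K\rangle$, factorized over positions. - $X_0\sim p_0$ and $X_t\mid X_0\sim q_{t|0}(\cdot\mid X_0)$. **Posteriors.** - $p^\ell_{0|t}(x\mid\mathbf x_t)=\mathbb P(X_0^\ell=x\mid X_t=\mathbf x_t)$. - $\hat{\mathbf x}^{\mathrm{loo}}_0(\mathbf x_t,t)^\ell=\mathbb E[X_0^\ell\mid X_t^{-\ell}=\mathbf x_t^{-\ell}]$. - When $\alpha_t<1$, every state has positive probability under the law of $X_t$. *)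

theory Defs
  imports "HOL-Analysis.Analysis" "HOL-Probability.Probability_Mass_Function"
begin

text \<open>Tokens: the finite type 'k (K = CARD('k)), token e_x = axis x 1 in real^'k.
  Positions: the finite type 'l (L = CARD('l)). Sequences: 'l \<Rightarrow> 'k.\<close>

definition tok :: "'k::finite \<Rightarrow> real^'k" where
  "tok x = axis x 1"

definition qkern :: "real \<Rightarrow> 'k::finite \<Rightarrow> 'k \<Rightarrow> real" where
  "qkern a xt x0 = tok xt \<bullet> (a *\<^sub>R tok x0 + ((1 - a) / real CARD('k)) *\<^sub>R (\<chi> j. 1))"

definition qfwd :: "real \<Rightarrow> ('l::finite \<Rightarrow> 'k::finite) \<Rightarrow> ('l \<Rightarrow> 'k) \<Rightarrow> real" where
  "qfwd a xt x0 = (\<Prod>m\<in>UNIV. qkern a (xt m) (x0 m))"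

definition joint :: "('l::finite \<Rightarrow> 'k::finite) pmf \<Rightarrow> real \<Rightarrow> ('l \<Rightarrow> 'k) \<Rightarrow> ('l \<Rightarrow> 'k) \<Rightarrow> real" where
  "joint p0 a x0 xt = pmf p0 x0 * qfwd a xt x0"

definition post :: "('l::finite \<Rightarrow> 'k::finite) pmf \<Rightarrow> real \<Rightarrow> 'l \<Rightarrow> ('l \<Rightarrow> 'k) \<Rightarrow> 'k \<Rightarrow> real" where
  "post p0 a l xt x =
     (\<Sum>x0\<in>{x0. x0 l = x}. joint p0 a x0 xt) / (\<Sum>x0\<in>UNIV. joint p0 a x0 xt)"

definition denoiser :: "('l::finite \<Rightarrow> 'k::finite) pmf \<Rightarrow> real \<Rightarrow> 'l \<Rightarrow> ('l \<Rightarrow> 'k) \<Rightarrow> real^'k" where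
  "denoiser p0 a l xt = (\<Sum>x\<in>UNIV. post p0 a l xt x *\<^sub>R tok x)"

text \<open>Leave-one-out posterior mean E[X_0^l | X_t^{-l} = xt^{-l}].\<close>
definition loo :: "('l::finite \<Rightarrow> 'k::finite) pmf \<Rightarrow> real \<Rightarrow> 'l \<Rightarrow> ('l \<Rightarrow> 'k) \<Rightarrow> real^'k" where
  "loo p0 a l xt =
     (let S = {y. \<forall>m. m \<noteq> l \<longrightarrow> y m = xt m} in
      (1 / (\<Sum>x0\<in>UNIV. \<Sum>y\<in>S. joint p0 a x0 y)) *\<^sub>R
        (\<Sum>x0\<in>UNIV. \<Sum>y\<in>S. joint p0 a x0 y *\<^sub>R tok (x0 l)))"

definition softmax :: "real^'k::finite \<Rightarrow> real^'k" where
  "softmax f = (\<chi> i. exp (f $ i) / (\<Sum>j\<in>UNIV. exp (f $ j)))"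

end

theory Submission imports Defs begin

text \<open>Summing out the token of X_t at position l leaves the joint law of X_0 and X_t^{-l},
  whose l-marginal normalises to \<nu>. Conditioning further on X_t^l = e_k is a Bayes update of \<nu>
  by the likelihood q(e_k | .), which is proportional to K \<alpha> e_k + (1 - \<alpha>) 1; this gives \<mu>
  explicitly. The update can be solved for \<nu>, and on softmax vectors it adds
  ln (1 + K \<alpha> / (1 - \<alpha>)) to the logit of e_k.\<close>

lemma tok_inner: "tok i \<bullet> (v::real^'k::finite) = v $ i"
  by (simp add: tok_def inner_axis')

lemma tok_nth: "tok i $ j = (if j = i then 1 else (0::real))"
  by (simp add: tok_def axis_def)

lemma tok_eq_iff: "tok i = tok j \<longleftrightarrow> i = j"
  by (simp add: tok_def axis_eq_axis)

lemma sum_scaleR_tok_nth: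
  fixes g :: "'a::finite \<Rightarrow> 'k::finite"
  shows "(\<Sum>x\<in>UNIV. c x *\<^sub>R tok (g x)) $ i = (\<Sum>x\<in>{x. g x = i}. c x)"
proof -
  have "(\<Sum>x\<in>UNIV. c x *\<^sub>R tok (g x)) $ i = (\<Sum>x\<in>UNIV. if g x = i then c x else 0)"
    by (auto simp: tok_nth intro!: sum.cong)
  also have "\<dots> = (\<Sum>x\<in>{x. g x = i}. c x)"
    by (simp add: sum.If_cases)
  finally show ?thesis .
qed

definition reweight :: "('k::finite \<Rightarrow> real) \<Rightarrow> real^'k \<Rightarrow> real^'k" where
  "reweight w v = (1 / (\<Sum>j\<in>UNIV. v $ j * w j)) *\<^sub>R (\<chi> i. v $ i * w i)"

lemma reweight_scaleR:
  assumes "c \<noteq> 0"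
  shows "reweight w (c *\<^sub>R v) = reweight w v"
  using assms by (simp add: reweight_def vec_eq_iff mult.assoc flip: sum_distrib_left)

lemma reweight_scale_weights:
  assumes "c \<noteq> 0"
  shows "reweight (\<lambda>i. c * w i) v = reweight w v"
  using assms by (simp add: reweight_def vec_eq_iff mult.left_commute[of _ c] flip: sum_distrib_left)

lemma reweight_softmax:
  assumes "\<And>i. w i > 0"
  shows "reweight w (softmax f) = softmax (f + (\<chi> i. ln (w i)))"
proof -
  define Z where "Z = (\<Sum>j\<in>UNIV. exp (f $ j))"
  have "Z > 0"
    unfolding Z_def by (simp add: sum_pos)
  have "softmax f = (1 / Z) *\<^sub>R (\<chi> i. exp (f $ i))"
    by (simp add: softmax_def Z_def vec_eq_iff)
  with \<open>Z > 0\<close> have "reweight w (softmax f) = reweight w (\<chi> i. exp (f $ i))"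
    by (simp add: reweight_scaleR)
  also have "\<dots> = softmax (f + (\<chi> i. ln (w i)))"
    using assms by (simp add: reweight_def softmax_def exp_add vec_eq_iff)
  finally show ?thesis .
qed

lemma qkern_eq: "qkern a (y::'k::finite) x = (if y = x then a else 0) + (1 - a) / real CARD('k)"
  by (simp add: qkern_def tok_inner tok_nth inner_add_right)

lemma sum_qkern: "(\<Sum>y\<in>UNIV. qkern a (y::'k::finite) x) = 1"
  by (simp add: qkern_eq sum.distrib)

lemma qkern_pos:
  assumes "0 \<le> a" "a < 1"
  shows "qkern a y x > 0"
  using assms by (simp add: qkern_eq add_nonneg_pos)

lemma reweight_qkern:
  fixes v :: "real^'k::finite"
  defines "K \<equiv> real CARD('k)"
  assumes "(\<Sum>i\<in>UNIV. v $ i) = 1"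
  shows "reweight (qkern a k) v =
    (1 / (1 - a + K * a * (tok k \<bullet> v))) *\<^sub>R ((1 - a) *\<^sub>R v + (K * a * (tok k \<bullet> v)) *\<^sub>R tok k)"
proof -
  have "K > 0"
    unfolding K_def by simp
  have q: "qkern a k = (\<lambda>i. (1 / K) * ((if i = k then K * a else 0) + (1 - a)))"
    using \<open>K > 0\<close> by (auto simp: fun_eq_iff qkern_eq K_def field_simps)
  have norm: "(\<Sum>j\<in>UNIV. v $ j * ((if j = k then K * a else 0) + (1 - a)))
      = 1 - a + K * a * v $ k"
    using assms(2) by (simp add: distrib_left sum.distrib if_distrib[of "\<lambda>z. _ * z"]
        cong: if_cong flip: sum_distrib_right)
  have w: "reweight (qkern a k) v = reweight (\<lambda>i. (if i = k then K * a else 0) + (1 - a)) v"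
    unfolding q by (rule reweight_scale_weights) (use \<open>K > 0\<close> in simp)
  have vec: "(\<chi> i. v $ i * ((if i = k then K * a else 0) + (1 - a)))
      = (1 - a) *\<^sub>R v + (K * a * (tok k \<bullet> v)) *\<^sub>R tok k"
    by (simp add: vec_eq_iff tok_inner tok_nth algebra_simps)
  show ?thesis
    unfolding w unfolding reweight_def norm vec by (simp add: tok_inner)
qed

lemma reweight_qkern_softmax:
  fixes f :: "real^'k::finite"
  defines "K \<equiv> real CARD('k)"
  assumes "0 \<le> a" "a < 1"
  shows "reweight (qkern a k) (softmax f) = softmax (f + ln (1 + K * a / (1 - a)) *\<^sub>R tok k)"
proof -
  define c where "c = 1 + K * a / (1 - a)"
  have "K > 0"
    unfolding K_def by simp
  then have "c > 0"
    using assms unfolding c_def by (simp add: add_pos_nonneg)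
  have q: "qkern a k = (\<lambda>i. (1 - a) / K * (if i = k then c else 1))"
    using \<open>K > 0\<close> \<open>a < 1\<close> by (auto simp: fun_eq_iff qkern_eq K_def c_def field_simps)
  have ln: "(\<chi> i. ln (if i = k then c else 1)) = ln c *\<^sub>R tok k"
    by (simp add: vec_eq_iff tok_nth)
  have "reweight (qkern a k) (softmax f) = reweight (\<lambda>i. if i = k then c else 1) (softmax f)"
    unfolding q by (rule reweight_scale_weights) (use \<open>K > 0\<close> \<open>a < 1\<close> in simp)
  also have "\<dots> = softmax (f + ln c *\<^sub>R tok k)"
    unfolding ln[symmetric] by (rule reweight_softmax) (use \<open>c > 0\<close> in simp)
  finally show ?thesis
    unfolding c_def .
qed

lemma tilt_inverse:
  fixes e v u :: "'a::real_inner" and a K :: real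
  defines "E \<equiv> 1 - a + K * a * (e \<bullet> v)"
  defines "c \<equiv> 1 + (K - 1) * a"
  assumes "e \<bullet> e = 1" "a \<noteq> 1" "c \<noteq> 0" "E \<noteq> 0"
    and u: "u = (1 / E) *\<^sub>R ((1 - a) *\<^sub>R v + (K * a * (e \<bullet> v)) *\<^sub>R e)"
  shows "v = (1 / (c - K * a * (e \<bullet> u))) *\<^sub>R (c *\<^sub>R u - (K * a * (e \<bullet> u)) *\<^sub>R e)"
proof -
  have "(1 - a) * (e \<bullet> v) + K * a * (e \<bullet> v) = c * (e \<bullet> v)"
    by (simp add: c_def algebra_simps)
  then have uk: "e \<bullet> u = c * (e \<bullet> v) / E"
    unfolding u using \<open>e \<bullet> e = 1\<close> by (simp add: inner_add_right)
  have den: "c - K * a * (e \<bullet> u) = c * (1 - a) / E"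
    unfolding uk using \<open>E \<noteq> 0\<close> by (simp add: E_def field_simps)
  have "c *\<^sub>R u = (c * (1 - a) / E) *\<^sub>R v + (K * a * (c * (e \<bullet> v) / E)) *\<^sub>R e"
    unfolding u by (simp add: scaleR_add_right ac_simps)
  then have num: "c *\<^sub>R u - (K * a * (e \<bullet> u)) *\<^sub>R e = (c * (1 - a) / E) *\<^sub>R v"
    unfolding uk by simp
  show ?thesis
    unfolding den num using assms(3-6) by simp
qed

text \<open>P(X_0 = x0, X_t^{-l} = xt^{-l}).\<close>

definition joint_loo :: "('l::finite \<Rightarrow> 'k::finite) pmf \<Rightarrow> real \<Rightarrow> 'l \<Rightarrow> ('l \<Rightarrow> 'k) \<Rightarrow> ('l \<Rightarrow> 'k) \<Rightarrow> real"
  where "joint_loo p0 a l xt x0 = pmf p0 x0 * (\<Prod>m\<in>UNIV - {l}. qkern a (xt m) (x0 m))"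

definition loo_mass :: "('l::finite \<Rightarrow> 'k::finite) pmf \<Rightarrow> real \<Rightarrow> 'l \<Rightarrow> ('l \<Rightarrow> 'k) \<Rightarrow> real^'k"
  where "loo_mass p0 a l xt = (\<chi> i. \<Sum>x0\<in>{x0. x0 l = i}. joint_loo p0 a l xt x0)"

lemma joint_eq_joint_loo: "joint p0 a x0 xt = joint_loo p0 a l xt x0 * qkern a (xt l) (x0 l)"
  by (simp add: joint_def joint_loo_def qfwd_def prod.remove[of UNIV l] ac_simps)

lemma joint_loo_fun_upd [simp]: "joint_loo p0 a l (xt(l := v)) = joint_loo p0 a l xt"
  by (auto simp: fun_eq_iff joint_loo_def intro!: prod.cong)

lemma sum_joint_fiber:
  "(\<Sum>y\<in>{y. \<forall>m. m \<noteq> l \<longrightarrow> y m = xt m}. joint p0 a x0 y) = joint_loo p0 a l xt x0"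
proof -
  have "{y. \<forall>m. m \<noteq> l \<longrightarrow> y m = xt m} = range (\<lambda>v. xt(l := v))"
    by (auto simp: image_def fun_eq_iff)
  moreover have "inj (\<lambda>v. xt(l := v))"
    by (auto simp: inj_def fun_eq_iff)
  ultimately show ?thesis
    by (simp add: sum.reindex joint_eq_joint_loo[where l = l] sum_qkern flip: sum_distrib_left)
qed

lemma sum_loo_mass: "(\<Sum>i\<in>UNIV. loo_mass p0 a l xt $ i) = (\<Sum>x0\<in>UNIV. joint_loo p0 a l xt x0)"
  using sum.group[of UNIV UNIV "\<lambda>x0. x0 l" "joint_loo p0 a l xt"] by (simp add: loo_mass_def)

lemma loo_eq_loo_mass:
  "loo p0 a l xt = (1 / (\<Sum>i\<in>UNIV. loo_mass p0 a l xt $ i)) *\<^sub>R loo_mass p0 a l xt"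
proof -
  have "(\<Sum>x0\<in>UNIV. joint_loo p0 a l xt x0 *\<^sub>R tok (x0 l)) = loo_mass p0 a l xt"
    unfolding vec_eq_iff sum_scaleR_tok_nth loo_mass_def by simp
  then show ?thesis
    by (simp add: loo_def Let_def sum_joint_fiber sum_loo_mass flip: scaleR_sum_left)
qed

lemma denoiser_eq_reweight_loo_mass:
  "denoiser p0 a l xt = reweight (qkern a (xt l)) (loo_mass p0 a l xt)"
proof -
  let ?q = "qkern a (xt l)"
  have fiber: "(\<Sum>x0\<in>{x0. x0 l = i}. joint p0 a x0 xt) = loo_mass p0 a l xt $ i * ?q i" for i
    by (simp add: loo_mass_def joint_eq_joint_loo[where l = l] sum_distrib_right)
  have "(\<Sum>x0\<in>UNIV. joint p0 a x0 xt) = (\<Sum>i\<in>UNIV. \<Sum>x0\<in>{x0. x0 l = i}. joint p0 a x0 xt)"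
    using sum.group[of UNIV UNIV "\<lambda>x0. x0 l" "\<lambda>x0. joint p0 a x0 xt"] by simp
  then have total: "(\<Sum>x0\<in>UNIV. joint p0 a x0 xt) = (\<Sum>i\<in>UNIV. loo_mass p0 a l xt $ i * ?q i)"
    by (simp add: fiber)
  show ?thesis
    unfolding denoiser_def vec_eq_iff sum_scaleR_tok_nth
    by (simp add: post_def fiber total reweight_def)
qed

lemma joint_loo_nonneg:
  assumes "0 \<le> a" "a < 1"
  shows "joint_loo p0 a l xt x0 \<ge> 0"
  unfolding joint_loo_def
  by (intro mult_nonneg_nonneg prod_nonneg pmf_nonneg) (simp add: less_imp_le qkern_pos[OF assms])

lemma sum_loo_mass_pos:
  assumes "0 \<le> a" "a < 1"
  shows "(\<Sum>i\<in>UNIV. loo_mass p0 a l xt $ i) > 0"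
proof -
  obtain x1 where "x1 \<in> set_pmf p0"
    using set_pmf_not_empty by fastforce
  then have "joint_loo p0 a l xt x1 > 0"
    using qkern_pos[OF assms] pmf_nonneg[of p0 x1]
    by (auto simp: joint_loo_def set_pmf_iff intro!: mult_pos_pos prod_pos)
  then show ?thesis
    unfolding sum_loo_mass using joint_loo_nonneg[OF assms] by (metis UNIV_I finite sum_pos2)
qed

lemma loo_nonneg:
  assumes "0 \<le> a" "a < 1"
  shows "loo p0 a l xt $ i \<ge> 0"
proof -
  have "loo_mass p0 a l xt $ i \<ge> 0"
    unfolding loo_mass_def by (simp add: sum_nonneg joint_loo_nonneg[OF assms])
  then show ?thesis
    using sum_loo_mass_pos[OF assms, of p0 l xt] by (simp add: loo_eq_loo_mass)
qed

lemma sum_loo: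
  assumes "0 \<le> a" "a < 1"
  shows "(\<Sum>i\<in>UNIV. loo p0 a l xt $ i) = 1"
  using sum_loo_mass_pos[OF assms, of p0 l xt]
  by (simp add: loo_eq_loo_mass flip: sum_divide_distrib)

lemma denoiser_eq_reweight_loo:
  assumes "0 \<le> a" "a < 1"
  shows "denoiser p0 a l xt = reweight (qkern a (xt l)) (loo p0 a l xt)"
  using sum_loo_mass_pos[OF assms, of p0 l xt]
  by (simp add: denoiser_eq_reweight_loo_mass loo_eq_loo_mass reweight_scaleR)

theorem mainTheorem4:
  fixes \<alpha> :: "real \<Rightarrow> real" and t :: real
    and p0 :: "('l::finite \<Rightarrow> 'k::finite) pmf"
    and xt :: "'l \<Rightarrow> 'k" and l :: 'l and k :: 'k
  assumes K2: "CARD('k) \<ge> 2"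
    and \<alpha>_range: "\<forall>s\<in>{0..1}. \<alpha> s \<in> {0..1}"
    and \<alpha>_mono: "\<forall>s\<in>{0..1}. \<forall>u\<in>{0..1}. s \<le> u \<longrightarrow> \<alpha> u \<le> \<alpha> s"
    and \<alpha>0: "\<alpha> 0 = 1"
    and t: "t \<in> {0..1}" and \<alpha>t: "\<alpha> t < 1"
    and xk: "tok (xt l) = tok k"
  shows "(let K = real CARD('k); a = \<alpha> t;
             \<nu> = loo p0 a l xt; \<mu> = denoiser p0 a l xt;
             \<nu>k = tok k \<bullet> \<nu>; \<mu>k = tok k \<bullet> \<mu>
         in \<mu> = (1 / (1 - a + K * a * \<nu>k)) *\<^sub>R ((1 - a) *\<^sub>R \<nu> + (K * a * \<nu>k) *\<^sub>R tok k)
          \<and> \<nu> = (1 / (1 + (K - 1) * a - K * a * \<mu>k)) *\<^sub>R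
                  ((1 + (K - 1) * a) *\<^sub>R \<mu> - (K * a * \<mu>k) *\<^sub>R tok k)
          \<and> (\<forall>f. \<nu> = softmax f \<longrightarrow>
                 \<mu> = softmax (f + ln (1 + K * a / (1 - a)) *\<^sub>R tok k)))"
proof -
  define a where "a = \<alpha> t"
  define K where "K = real CARD('k)"
  let ?\<nu> = "loo p0 a l xt" and ?\<mu> = "denoiser p0 a l xt"
  have a: "0 \<le> a" "a < 1"
    using \<alpha>_range t \<alpha>t unfolding a_def by auto
  have "K > 0"
    unfolding K_def by simp
  have \<mu>: "?\<mu> = reweight (qkern a k) ?\<nu>"
    using xk by (simp add: tok_eq_iff denoiser_eq_reweight_loo[OF a])
  have tilt: "?\<mu> = (1 / (1 - a + K * a * (tok k \<bullet> ?\<nu>))) *\<^sub>R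
      ((1 - a) *\<^sub>R ?\<nu> + (K * a * (tok k \<bullet> ?\<nu>)) *\<^sub>R tok k)"
    unfolding \<mu> K_def using sum_loo[OF a] by (rule reweight_qkern)
  have "K * a * (tok k \<bullet> ?\<nu>) \<ge> 0"
    unfolding tok_inner using a \<open>K > 0\<close>
    by (intro mult_nonneg_nonneg) (simp_all add: loo_nonneg)
  moreover have "1 + (K - 1) * a > 0"
    using a K2 by (simp add: K_def add_pos_nonneg)
  ultimately have "?\<nu> = (1 / (1 + (K - 1) * a - K * a * (tok k \<bullet> ?\<mu>))) *\<^sub>R
      ((1 + (K - 1) * a) *\<^sub>R ?\<mu> - (K * a * (tok k \<bullet> ?\<mu>)) *\<^sub>R tok k)"
    using a by (intro tilt_inverse[OF _ _ _ _ tilt]) (auto simp: tok_inner tok_nth)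
  moreover have "?\<nu> = softmax f \<Longrightarrow> ?\<mu> = softmax (f + ln (1 + K * a / (1 - a)) *\<^sub>R tok k)" for f
    unfolding \<mu> K_def using a by (simp add: reweight_qkern_softmax)
  ultimately show ?thesis
    using tilt unfolding Let_def a_def K_def by blast
qed

end
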